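(* Let $p\in(0,1)$ and let $X$, $\gamma$ satisfy the standing assumptions in the context. Then $\inf\{\mathrm{VaR}_p(g(X)):g\in\mathcal G_{\rm cm}\}=-\infty$. Hence the problem of minimizing $\mathrm{VaR}_p(g(X))$ over $g\in\mathcal G_{\rm cm}$ admits no solution.
   Context: $(\Omega,\mathcal F,\mathbb P)$ is atomless. $\mathrm{VaR}_p(Y)=\inf\{x:\mathbb P(Y\le x)\ge p\}$. Standing assumptions: $X\ge0$ is a random variable whose distribution has a positive density on its support; $\gamma:\mathbb R\to\mathbb R$ is continuous and strictly positive with $\mathbb E[\gamma(X)]=1$ and $\mathbb E[\gamma(X)X]<\infty$. With $\mathcal G_1$ the measurable functions $\mathbb R\to\mathbb R$ and a budget $x_0\in\mathbb R$, $\mathcal G_{\rm cm}=\{g\in\mathcal G_1:\mathbb E[\gamma(X)g(X)]\ge x_0\}$. *)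

theory Defs
  imports "HOL-Probability.Probability"
begin

definition VaR :: "'a measure \<Rightarrow> real \<Rightarrow> ('a \<Rightarrow> real) \<Rightarrow> real" where
  "VaR M p Y = Inf {x. measure M {\<omega> \<in> space M. Y \<omega> \<le> x} \<ge> p}"

definition atomless :: "'a measure \<Rightarrow> bool" where
  "atomless M \<longleftrightarrow> (\<forall>A\<in>sets M. measure M A > 0 \<longrightarrow>
      (\<exists>B\<in>sets M. B \<subseteq> A \<and> 0 < measure M B \<and> measure M B < measure M A))"

definition dist_support :: "'a measure \<Rightarrow> ('a \<Rightarrow> real) \<Rightarrow> real set" where
  "dist_support M X = {x. \<forall>e>0. measure M {\<omega> \<in> space M. \<bar>X \<omega> - x\<bar> < e} > 0}"

definition G_cm :: "'a measure \<Rightarrow> ('a \<Rightarrow> real) \<Rightarrow> (real \<Rightarrow> real) \<Rightarrow> real \<Rightarrow> (real \<Rightarrow> real) set" where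
  "G_cm M X \<gamma> x0 = {g. g \<in> borel_measurable borel \<and>
      integrable M (\<lambda>\<omega>. \<gamma> (X \<omega>) * g (X \<omega>)) \<and>
      (\<integral>\<omega>. \<gamma> (X \<omega>) * g (X \<omega>) \<partial>M) \<ge> x0}"

end

theory Submission
  imports Defs
begin

text \<open>Since X has a density, its distribution function is continuous, so there is a level q
  with P(X \<le> q) = p, and then P(X > q) = 1 - p > 0. For the step function
  g = L + D \<cdot> 1_(q,\<infinity>) with D \<ge> 0 we get VaR_p(g(X)) = L, while
  E[\<gamma>(X) g(X)] = L + D \<cdot> E[\<gamma>(X) 1_{X > q}] with a positive last expectation because \<gamma> > 0.
  Choosing D large meets the budget x0 for every L, so VaR_p is unbounded below on G_cm and
  in particular has no minimiser there.\<close>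

lemma integral_pos_if_pos_on_non_null_set:
  fixes f :: "'a \<Rightarrow> real"
  assumes "integrable M f" and "\<And>x. x \<in> space M \<Longrightarrow> 0 \<le> f x"
    and "A \<in> sets M" and "0 < measure M A" and "\<And>x. x \<in> A \<Longrightarrow> 0 < f x"
  shows "0 < integral\<^sup>L M f"
proof (rule ccontr)
  assume "\<not> 0 < integral\<^sup>L M f"
  then have "AE x in M. f x = 0"
    using assms(2) integral_nonneg_eq_0_iff_AE[OF assms(1)] integral_nonneg_AE[of f M]
    by (auto simp: less_le)
  then have "AE x in M. x \<notin> A"
    by eventually_elim (use assms(5) in force)
  then have "emeasure M A = 0"
    using AE_iff_measurable[OF assms(3), of "\<lambda>x. x \<notin> A"] sets.sets_into_space[OF assms(3)]
    by auto
  then show False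
    using assms(4) by (simp add: measure_def)
qed

lemma distributed_measure_eq_0:
  fixes X :: "'a \<Rightarrow> real"
  assumes "distributed M lborel X f"
  shows "measure M {\<omega> \<in> space M. X \<omega> = x} = 0"
proof -
  have "emeasure M (X -` {x} \<inter> space M) = (\<integral>\<^sup>+y. f y * indicator {x} y \<partial>lborel)"
    by (rule distributed_emeasure[OF assms]) simp
  also have "\<dots> = (\<integral>\<^sup>+(y::real). 0 \<partial>lborel)"
  proof (rule nn_integral_cong_AE)
    show "AE y in lborel. f y * indicator {x} y = 0"
      using AE_lborel_singleton[of x] by eventually_elim simp
  qed
  finally show ?thesis
    by (simp add: measure_def vimage_def Int_def conj_commute)
qed

lemma (in prob_space) exists_prob_le_eq:
  fixes X :: "'a \<Rightarrow> real"
  assumes "X \<in> borel_measurable M" and "\<And>x. prob {\<omega> \<in> space M. X \<omega> = x} = 0"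
    and "0 < p" and "p < 1"
  shows "\<exists>q. prob {\<omega> \<in> space M. X \<omega> \<le> q} = p"
proof -
  define N where "N = distr M borel X"
  interpret N: real_distribution N
    unfolding N_def using assms(1) by simp
  have cdf_N: "cdf N x = prob {\<omega> \<in> space M. X \<omega> \<le> x}" for x
    using assms(1) by (simp add: cdf_def N_def measure_distr vimage_def Int_def conj_commute)
  have "measure N {x} = 0" for x
    using assms(1,2) by (simp add: N_def measure_distr vimage_def Int_def conj_commute)
  then have cont: "continuous_on UNIV (cdf N)"
    by (simp add: continuous_on_eq_continuous_at N.isCont_cdf)
  obtain a where "cdf N a < p"
    using order_tendstoD(2)[OF N.cdf_lim_at_bot assms(3)]
    by (auto simp: eventually_at_bot_linorder)
  moreover obtain b where "p < cdf N b"
    using order_tendstoD(1)[OF N.cdf_lim_at_top_prob assms(4)]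
    by (auto simp: eventually_at_top_linorder)
  moreover from calculation have "a \<le> b"
    using N.cdf_nondecreasing[of b a] by (cases "a \<le> b") auto
  ultimately obtain q where "cdf N q = p"
    using IVT'[of "cdf N" a p b] cont by (auto intro: continuous_on_subset)
  then show ?thesis
    using cdf_N by auto
qed

lemma VaR_eq_lower_bound:
  assumes "0 < p" and "\<And>\<omega>. \<omega> \<in> space M \<Longrightarrow> L \<le> Y \<omega>"
    and "p \<le> measure M {\<omega> \<in> space M. Y \<omega> \<le> L}"
  shows "VaR M p Y = L"
  unfolding VaR_def
proof (rule cInf_eq_minimum)
  show "L \<in> {x. p \<le> measure M {\<omega> \<in> space M. Y \<omega> \<le> x}}"
    using assms(3) by simp
next
  fix x assume x: "x \<in> {x. p \<le> measure M {\<omega> \<in> space M. Y \<omega> \<le> x}}"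
  show "L \<le> x"
  proof (rule ccontr)
    assume "\<not> L \<le> x"
    then have "{\<omega> \<in> space M. Y \<omega> \<le> x} = {}"
      using assms(2) by force
    then have "measure M {\<omega> \<in> space M. Y \<omega> \<le> x} = 0"
      by (metis measure_empty)
    then show False
      using x assms(1) by simp
  qed
qed

lemma step_function_in_G_cm:
  fixes X :: "'a \<Rightarrow> real" and \<gamma> :: "real \<Rightarrow> real"
  assumes [measurable]: "X \<in> borel_measurable M" "\<gamma> \<in> borel_measurable borel"
    and "integrable M (\<lambda>\<omega>. \<gamma> (X \<omega>))" and "(\<integral>\<omega>. \<gamma> (X \<omega>) \<partial>M) = 1"
    and "integrable M (\<lambda>\<omega>. \<gamma> (X \<omega>) * indicator {q<..} (X \<omega>))"
    and "0 < (\<integral>\<omega>. \<gamma> (X \<omega>) * indicator {q<..} (X \<omega>) \<partial>M)"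
  shows "\<exists>D\<ge>0. (\<lambda>x. L + D * indicator {q<..} x) \<in> G_cm M X \<gamma> x0"
proof -
  define I where "I = (\<integral>\<omega>. \<gamma> (X \<omega>) * indicator {q<..} (X \<omega>) \<partial>M)"
  define D where "D = \<bar>x0 - L\<bar> / I"
  have I_pos: "0 < I"
    using assms(6) by (simp add: I_def)
  have split: "\<gamma> (X \<omega>) * (L + D * indicator {q<..} (X \<omega>))
      = L * \<gamma> (X \<omega>) + D * (\<gamma> (X \<omega>) * indicator {q<..} (X \<omega>))" for \<omega>
    by (simp add: algebra_simps)
  have "integrable M (\<lambda>\<omega>. \<gamma> (X \<omega>) * (L + D * indicator {q<..} (X \<omega>)))"
    unfolding split using assms(3,5) by simp
  moreover have "(\<integral>\<omega>. \<gamma> (X \<omega>) * (L + D * indicator {q<..} (X \<omega>)) \<partial>M) = L + D * I"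
    unfolding split I_def using assms(3,4,5) by simp
  moreover have "L + D * I = L + \<bar>x0 - L\<bar>"
    using I_pos by (simp add: D_def)
  ultimately have "(\<lambda>x. L + D * indicator {q<..} x) \<in> G_cm M X \<gamma> x0"
    unfolding G_cm_def by auto
  moreover have "0 \<le> D"
    using I_pos by (simp add: D_def)
  ultimately show ?thesis
    by blast
qed

lemma VaR_unbounded_below_on_G_cm:
  fixes X :: "'a \<Rightarrow> real" and \<gamma> :: "real \<Rightarrow> real"
  assumes "prob_space M" and [measurable]: "X \<in> borel_measurable M"
    and "distributed M lborel X f"
    and [measurable]: "\<gamma> \<in> borel_measurable borel" and "\<And>x. 0 < \<gamma> x"
    and "integrable M (\<lambda>\<omega>. \<gamma> (X \<omega>))" and "(\<integral>\<omega>. \<gamma> (X \<omega>) \<partial>M) = 1"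
    and "0 < p" and "p < 1"
  shows "\<exists>g\<in>G_cm M X \<gamma> x0. VaR M p (\<lambda>\<omega>. g (X \<omega>)) < c"
proof -
  interpret prob_space M by (rule assms(1))
  obtain q where q: "prob {\<omega> \<in> space M. X \<omega> \<le> q} = p"
    using exists_prob_le_eq[OF assms(2) distributed_measure_eq_0[OF assms(3)] assms(8,9)] by blast
  have "prob {\<omega> \<in> space M. q < X \<omega>} = prob (space M - {\<omega> \<in> space M. X \<omega> \<le> q})"
    by (rule arg_cong[where f = prob]) auto
  also have "\<dots> = 1 - p"
    using prob_compl[of "{\<omega> \<in> space M. X \<omega> \<le> q}"] q by simp
  finally have "prob {\<omega> \<in> space M. q < X \<omega>} = 1 - p" .
  have int: "integrable M (\<lambda>\<omega>. \<gamma> (X \<omega>) * indicator {q<..} (X \<omega>))"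
    by (rule Bochner_Integration.integrable_bound[OF assms(6)])
      (auto simp: indicator_def)
  have "0 < (\<integral>\<omega>. \<gamma> (X \<omega>) * indicator {q<..} (X \<omega>) \<partial>M)"
    by (rule integral_pos_if_pos_on_non_null_set[where A = "{\<omega> \<in> space M. q < X \<omega>}"])
      (use int assms(5,9) \<open>prob {\<omega> \<in> space M. q < X \<omega>} = 1 - p\<close> in
        \<open>auto simp: less_imp_le\<close>)
  then obtain D where "0 \<le> D" and g_adm: "(\<lambda>x. (c - 1) + D * indicator {q<..} x) \<in> G_cm M X \<gamma> x0"
    using step_function_in_G_cm[OF assms(2,4,6,7) int] by blast
  have "prob {\<omega> \<in> space M. X \<omega> \<le> q}
      \<le> prob {\<omega> \<in> space M. (c - 1) + D * indicator {q<..} (X \<omega>) \<le> c - 1}"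
    by (rule finite_measure_mono) auto
  then have "VaR M p (\<lambda>\<omega>. (c - 1) + D * indicator {q<..} (X \<omega>)) = c - 1"
    using q assms(8) \<open>0 \<le> D\<close> by (intro VaR_eq_lower_bound) auto
  then show ?thesis
    using g_adm by force
qed

theorem proposition3:
  fixes M :: "'a measure" and X :: "'a \<Rightarrow> real" and \<gamma> :: "real \<Rightarrow> real"
    and f :: "real \<Rightarrow> ennreal" and p x0 :: real
  assumes "prob_space M" and "atomless M"
    and "X \<in> borel_measurable M"
    and "\<forall>\<omega>\<in>space M. X \<omega> \<ge> 0"
    and "distributed M lborel X f"
    and "\<forall>x\<in>dist_support M X. f x > 0"
    and "continuous_on UNIV \<gamma>" and "\<forall>x. \<gamma> x > 0"
    and "integrable M (\<lambda>\<omega>. \<gamma> (X \<omega>))" and "(\<integral>\<omega>. \<gamma> (X \<omega>) \<partial>M) = 1"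
    and "integrable M (\<lambda>\<omega>. \<gamma> (X \<omega>) * X \<omega>)"
    and "0 < p" and "p < 1"
  shows "(\<forall>c::real. \<exists>g\<in>G_cm M X \<gamma> x0. VaR M p (\<lambda>\<omega>. g (X \<omega>)) < c)
         \<and> \<not> (\<exists>g\<in>G_cm M X \<gamma> x0. \<forall>h\<in>G_cm M X \<gamma> x0.
                 VaR M p (\<lambda>\<omega>. g (X \<omega>)) \<le> VaR M p (\<lambda>\<omega>. h (X \<omega>)))"
proof -
  have "\<gamma> \<in> borel_measurable borel"
    using assms(7) by (rule borel_measurable_continuous_onI)
  then have unbounded: "\<forall>c. \<exists>g\<in>G_cm M X \<gamma> x0. VaR M p (\<lambda>\<omega>. g (X \<omega>)) < c"
    using VaR_unbounded_below_on_G_cm[OF assms(1,3,5)] assms(8-10,12,13) by blast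
  moreover have "\<not> (\<exists>g\<in>G_cm M X \<gamma> x0. \<forall>h\<in>G_cm M X \<gamma> x0.
                 VaR M p (\<lambda>\<omega>. g (X \<omega>)) \<le> VaR M p (\<lambda>\<omega>. h (X \<omega>)))"
  proof
    assume "\<exists>g\<in>G_cm M X \<gamma> x0. \<forall>h\<in>G_cm M X \<gamma> x0.
                 VaR M p (\<lambda>\<omega>. g (X \<omega>)) \<le> VaR M p (\<lambda>\<omega>. h (X \<omega>))"
    then obtain g where "\<forall>h\<in>G_cm M X \<gamma> x0. VaR M p (\<lambda>\<omega>. g (X \<omega>)) \<le> VaR M p (\<lambda>\<omega>. h (X \<omega>))"
      by blast
    then show False
      using unbounded by (meson not_le)
  qed
  ultimately show ?thesis
    by blast
qed

end
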